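(* Let $B$ be a finite skew left brace and $X\subseteq B$ with $|X|\ge3$, $\lambda_a(X)=X$ and $\sigma_a(X)=X$ for all $a\in B$, such that $B$ is additively generated by $X$, the ideal $V$ generated by $\{x-y:x,y\in X\}$ is the smallest non-zero ideal of $B$, $B/V$ is a trivial skew left brace of cyclic type, and $V$ acts transitively on $X$ (the group $\{\sigma_a\lambda_b|_X:a,b\in V\}$ is transitive on $X$). Then $B^{(3)}=0$ if and only if $\lambda_x=\lambda_y$ for all $x,y\in X$. Moreover, if $B^{(3)}=0$ then $\lambda_v=\mathrm{id}$ for every $v\in V$.
   Context: A skew left brace $(B,+,\circ)$: $(B,+)$ and $(B,\circ)$ are groups with $a\circ(b+c)=a\circ b-a+a\circ c$; $\lambda_a(b)=-a+a\circ b$ (an automorphism of $(B,+)$ with $\lambda_{a\circ b}=\lambda_a\lambda_b$), $\sigma_a(b)=-a+b+a$, $a*b=-a+a\circ b-b$. An ideal is a normal subgroup $I$ of $(B,+)$ with $\lambda_a(I)\subseteq I$ for all $a$ and normal in $(B,\circ)$; smallest non-zero ideal = non-zero ideal contained in every non-zero ideal. $I*J$ is the additive subgroup generated by $\{i*j\}$; $B^{(2)}=B*B$, $B^{(3)}=B^{(2)}*B$. $B/V$ is trivial if its two operations coincide, and of cyclic type if its additive group is cyclic. *)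

theory Defs
  imports "HOL-Algebra.Algebra"
begin

text \<open>A skew left brace is given by two group structures A (the additive group,
written with the HOL-Algebra multiplicative syntax) and M (the multiplicative
group, operation \<circ>) on the same carrier.\<close>

definition skew_brace :: "'a monoid \<Rightarrow> 'a monoid \<Rightarrow> bool" where
  "skew_brace A M \<longleftrightarrow> group A \<and> group M \<and> carrier A = carrier M \<and>
     (\<forall>a\<in>carrier A. \<forall>b\<in>carrier A. \<forall>c\<in>carrier A.
        a \<otimes>\<^bsub>M\<^esub> (b \<otimes>\<^bsub>A\<^esub> c)
          = (a \<otimes>\<^bsub>M\<^esub> b) \<otimes>\<^bsub>A\<^esub> inv\<^bsub>A\<^esub> a \<otimes>\<^bsub>A\<^esub> (a \<otimes>\<^bsub>M\<^esub> c))"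

definition lam :: "'a monoid \<Rightarrow> 'a monoid \<Rightarrow> 'a \<Rightarrow> 'a \<Rightarrow> 'a" where
  "lam A M a b = inv\<^bsub>A\<^esub> a \<otimes>\<^bsub>A\<^esub> (a \<otimes>\<^bsub>M\<^esub> b)"

definition sig :: "'a monoid \<Rightarrow> 'a \<Rightarrow> 'a \<Rightarrow> 'a" where
  "sig A a b = inv\<^bsub>A\<^esub> a \<otimes>\<^bsub>A\<^esub> b \<otimes>\<^bsub>A\<^esub> a"

definition bstar :: "'a monoid \<Rightarrow> 'a monoid \<Rightarrow> 'a \<Rightarrow> 'a \<Rightarrow> 'a" where
  "bstar A M a b = inv\<^bsub>A\<^esub> a \<otimes>\<^bsub>A\<^esub> (a \<otimes>\<^bsub>M\<^esub> b) \<otimes>\<^bsub>A\<^esub> inv\<^bsub>A\<^esub> b"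

definition brace_ideal :: "'a monoid \<Rightarrow> 'a monoid \<Rightarrow> 'a set \<Rightarrow> bool" where
  "brace_ideal A M I \<longleftrightarrow> normal I A \<and> (\<forall>a\<in>carrier A. lam A M a ` I \<subseteq> I) \<and> normal I M"

definition ideal_gen :: "'a monoid \<Rightarrow> 'a monoid \<Rightarrow> 'a set \<Rightarrow> 'a set" where
  "ideal_gen A M S = carrier A \<inter> \<Inter> {I. brace_ideal A M I \<and> S \<subseteq> I}"

definition smallest_nonzero_ideal :: "'a monoid \<Rightarrow> 'a monoid \<Rightarrow> 'a set \<Rightarrow> bool" where
  "smallest_nonzero_ideal A M V \<longleftrightarrow> brace_ideal A M V \<and> V \<noteq> {\<one>\<^bsub>A\<^esub>} \<and>
     (\<forall>I. brace_ideal A M I \<and> I \<noteq> {\<one>\<^bsub>A\<^esub>} \<longrightarrow> V \<subseteq> I)"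

definition star_prod :: "'a monoid \<Rightarrow> 'a monoid \<Rightarrow> 'a set \<Rightarrow> 'a set \<Rightarrow> 'a set" where
  "star_prod A M I J = generate A {bstar A M i j | i j. i \<in> I \<and> j \<in> J}"

definition B2 :: "'a monoid \<Rightarrow> 'a monoid \<Rightarrow> 'a set" where
  "B2 A M = star_prod A M (carrier A) (carrier A)"

definition B3 :: "'a monoid \<Rightarrow> 'a monoid \<Rightarrow> 'a set" where
  "B3 A M = star_prod A M (B2 A M) (carrier A)"

definition trivial_quotient :: "'a monoid \<Rightarrow> 'a monoid \<Rightarrow> 'a set \<Rightarrow> bool" where
  "trivial_quotient A M V \<longleftrightarrow> carrier (A Mod V) = carrier (M Mod V) \<and>
     (\<forall>P\<in>carrier (A Mod V). \<forall>Q\<in>carrier (A Mod V).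
        monoid.mult (A Mod V) P Q = monoid.mult (M Mod V) P Q)"

definition cyclic_grp :: "('a, 'b) monoid_scheme \<Rightarrow> bool" where
  "cyclic_grp G \<longleftrightarrow> (\<exists>g\<in>carrier G. generate G {g} = carrier G)"

end

theory Submission
  imports Defs
begin

text \<open>Let K be the set of all a with \<lambda>_a = id. It is an additive subgroup, \<lambda>_x = \<lambda>_y iff
x - y \<in> K, and I * B = 0 iff I \<subseteq> K; so B^(3) = 0 iff B^(2) \<subseteq> K. Since X is \<sigma>-invariant, the
differences x - y of elements of X generate a normal subgroup W of (B,+), and B^(2) \<subseteq> W because
\<lambda>_a(x) - x is such a difference and X generates B. If all \<lambda>_x agree, the differences lie in K,
hence B^(2) \<subseteq> W \<subseteq> K. Conversely, if B^(2) \<subseteq> K, then either B^(2) = 0 and \<lambda> is trivial, or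
B^(2) is a non-zero ideal and contains the smallest one V; either way V \<subseteq> K, and V contains the
differences.\<close>

lemma (in group) hom_image_generate_subset:
  assumes "f \<in> hom G G" and "S \<subseteq> carrier G" and "f ` S \<subseteq> generate G S"
  shows "f ` generate G S \<subseteq> generate G S"
proof -
  interpret group_hom G G f by unfold_locales (rule assms(1))
  have "f ` generate G S = generate G (f ` S)" using generate_img[OF assms(2)] by simp
  also have "\<dots> \<subseteq> generate G S"
    using assms(3) by (rule generate_subgroup_incl[OF _ generate_is_subgroup[OF assms(2)]])
  finally show ?thesis .
qed

lemma (in group) generate_eq_one_iff:
  assumes "S \<subseteq> carrier G"
  shows "generate G S = {\<one>} \<longleftrightarrow> S \<subseteq> {\<one>}"
  using generate.incl[of _ S G] generate.one[of G S] generate_subgroup_incl[OF _ triv_subgroup]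
  by blast

lemma (in group) mult_inv_cancel_left [simp]:
  "x \<in> carrier G \<Longrightarrow> y \<in> carrier G \<Longrightarrow> x \<otimes> (inv x \<otimes> y) = y"
  by (simp flip: m_assoc)

lemma (in group) inv_mult_cancel_left [simp]:
  "x \<in> carrier G \<Longrightarrow> y \<in> carrier G \<Longrightarrow> inv x \<otimes> (x \<otimes> y) = y"
  by (simp flip: m_assoc)

lemma (in group) conj_hom: "a \<in> carrier G \<Longrightarrow> (\<lambda>h. inv a \<otimes> h \<otimes> a) \<in> hom G G"
  by (rule homI) (simp_all add: m_assoc)

lemma (in group) normal_generate_if_conj_closed:
  assumes S: "S \<subseteq> carrier G"
    and conj_S: "\<And>a h. a \<in> carrier G \<Longrightarrow> h \<in> S \<Longrightarrow> inv a \<otimes> h \<otimes> a \<in> generate G S"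
  shows "generate G S \<lhd> G"
proof -
  have "x \<otimes> h \<otimes> inv x \<in> generate G S" if x: "x \<in> carrier G" and h: "h \<in> generate G S" for x h
  proof -
    have "(\<lambda>h. inv (inv x) \<otimes> h \<otimes> inv x) ` generate G S \<subseteq> generate G S"
      using x S conj_S[of "inv x"] by (intro hom_image_generate_subset conj_hom) auto
    then show ?thesis using x h by auto
  qed
  then show ?thesis by (simp add: normal_inv_iff generate_is_subgroup[OF S])
qed

definition differences :: "('a, 'b) monoid_scheme \<Rightarrow> 'a set \<Rightarrow> 'a set" where
  "differences H S = {x \<otimes>\<^bsub>H\<^esub> inv\<^bsub>H\<^esub> y | x y. x \<in> S \<and> y \<in> S}"

lemma (in group) differences_subset: "S \<subseteq> carrier G \<Longrightarrow> differences G S \<subseteq> carrier G"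
  unfolding differences_def by auto

lemma (in group) generate_differences_normal:
  assumes S: "S \<subseteq> carrier G" and conj_S: "\<And>a x. a \<in> carrier G \<Longrightarrow> x \<in> S \<Longrightarrow> inv a \<otimes> x \<otimes> a \<in> S"
  shows "generate G (differences G S) \<lhd> G"
proof (rule normal_generate_if_conj_closed[OF differences_subset[OF S]])
  fix a d assume a: "a \<in> carrier G" and "d \<in> differences G S"
  then obtain x y where x: "x \<in> S" and y: "y \<in> S" and d: "d = x \<otimes> inv y"
    unfolding differences_def by blast
  have "x \<in> carrier G" "y \<in> carrier G" using x y S by auto
  then have "inv a \<otimes> d \<otimes> a = (inv a \<otimes> x \<otimes> a) \<otimes> inv (inv a \<otimes> y \<otimes> a)"
    using a by (simp add: d m_assoc inv_mult_group)
  also have "\<dots> \<in> differences G S" unfolding differences_def using a x y conj_S by blast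
  finally show "inv a \<otimes> d \<otimes> a \<in> generate G (differences G S)" by (rule generate.incl)
qed

lemma subset_ideal_gen: "S \<subseteq> carrier A \<Longrightarrow> S \<subseteq> ideal_gen A M S"
  unfolding ideal_gen_def by blast

lemma brace_ideal_subset: "brace_ideal A M I \<Longrightarrow> I \<subseteq> carrier A"
  unfolding brace_ideal_def using normal_imp_subgroup subgroup.subset by blast

locale skew_left_brace = group A + M: group M
  for A :: "'a monoid" (structure) and M :: "'a monoid" +
  assumes carrier_M [simp]: "carrier M = carrier A"
    and brace_distrib: "\<lbrakk>a \<in> carrier A; b \<in> carrier A; c \<in> carrier A\<rbrakk> \<Longrightarrow>
      a \<otimes>\<^bsub>M\<^esub> (b \<otimes> c) = (a \<otimes>\<^bsub>M\<^esub> b) \<otimes> inv a \<otimes> (a \<otimes>\<^bsub>M\<^esub> c)"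

lemma skew_left_braceI: "skew_brace A M \<Longrightarrow> skew_left_brace A M"
  unfolding skew_brace_def skew_left_brace_def skew_left_brace_axioms_def by blast

context skew_left_brace
begin

lemma M_mult_closed [simp]: "a \<in> carrier A \<Longrightarrow> b \<in> carrier A \<Longrightarrow> a \<otimes>\<^bsub>M\<^esub> b \<in> carrier A"
  using M.m_closed by simp

lemma M_inv_closed [simp]: "a \<in> carrier A \<Longrightarrow> inv\<^bsub>M\<^esub> a \<in> carrier A"
  using M.inv_closed by simp

lemma one_M [simp]: "\<one>\<^bsub>M\<^esub> = \<one>"
proof -
  have one: "\<one>\<^bsub>M\<^esub> \<in> carrier A" using M.one_closed by simp
  have "\<one>\<^bsub>M\<^esub> \<otimes>\<^bsub>M\<^esub> (\<one> \<otimes> \<one>) = (\<one>\<^bsub>M\<^esub> \<otimes>\<^bsub>M\<^esub> \<one>) \<otimes> inv \<one>\<^bsub>M\<^esub> \<otimes> (\<one>\<^bsub>M\<^esub> \<otimes>\<^bsub>M\<^esub> \<one>)"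
    using brace_distrib[OF one one_closed one_closed] .
  then have "\<one> = inv \<one>\<^bsub>M\<^esub>" using one by (simp add: m_assoc)
  then show ?thesis using one by (metis inv_inv inv_one)
qed

lemma lam_closed [simp]: "a \<in> carrier A \<Longrightarrow> b \<in> carrier A \<Longrightarrow> lam A M a b \<in> carrier A"
  unfolding lam_def by simp

lemma M_mult_eq: "a \<in> carrier A \<Longrightarrow> b \<in> carrier A \<Longrightarrow> a \<otimes>\<^bsub>M\<^esub> b = a \<otimes> lam A M a b"
  unfolding lam_def by (simp flip: m_assoc)

lemma lam_hom: "a \<in> carrier A \<Longrightarrow> lam A M a \<in> hom A A"
  by (rule homI) (simp_all add: lam_def brace_distrib m_assoc)

lemma lam_group_hom: "a \<in> carrier A \<Longrightarrow> group_hom A A (lam A M a)"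
  by unfold_locales (rule lam_hom)

lemma lam_mult: "\<lbrakk>a \<in> carrier A; b \<in> carrier A; c \<in> carrier A\<rbrakk> \<Longrightarrow>
    lam A M a (b \<otimes> c) = lam A M a b \<otimes> lam A M a c"
  using lam_hom by (simp add: hom_mult)

lemma lam_inv: "a \<in> carrier A \<Longrightarrow> b \<in> carrier A \<Longrightarrow> lam A M a (inv b) = inv (lam A M a b)"
  using group_hom.hom_inv[OF lam_group_hom] by blast

lemma lam_one_right [simp]: "a \<in> carrier A \<Longrightarrow> lam A M a \<one> = \<one>"
  using group_hom.hom_one[OF lam_group_hom] by blast

lemma lam_one_left [simp]: "b \<in> carrier A \<Longrightarrow> lam A M \<one> b = b"
  unfolding lam_def using M.l_one[of b] by simp

lemma lam_M_mult: "\<lbrakk>a \<in> carrier A; b \<in> carrier A; c \<in> carrier A\<rbrakk> \<Longrightarrow>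
    lam A M (a \<otimes>\<^bsub>M\<^esub> b) c = lam A M a (lam A M b c)"
proof -
  assume a: "a \<in> carrier A" and b: "b \<in> carrier A" and c: "c \<in> carrier A"
  have "(a \<otimes>\<^bsub>M\<^esub> b) \<otimes>\<^bsub>M\<^esub> c = a \<otimes>\<^bsub>M\<^esub> (b \<otimes> lam A M b c)"
    using a b c by (simp add: M.m_assoc M_mult_eq[of b c])
  also have "\<dots> = (a \<otimes>\<^bsub>M\<^esub> b) \<otimes> (inv a \<otimes> (a \<otimes>\<^bsub>M\<^esub> lam A M b c))"
    using a b c by (simp add: brace_distrib m_assoc)
  finally show ?thesis
    using a b c by (simp add: lam_def[of A M "a \<otimes>\<^bsub>M\<^esub> b"] lam_def[of A M a] flip: m_assoc)
qed

lemma lam_M_inv_left [simp]: "a \<in> carrier A \<Longrightarrow> c \<in> carrier A \<Longrightarrow> lam A M (inv\<^bsub>M\<^esub> a) (lam A M a c) = c"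
  using lam_M_mult[of "inv\<^bsub>M\<^esub> a" a c] M.l_inv[of a] by simp

lemma lam_M_inv_right [simp]: "a \<in> carrier A \<Longrightarrow> c \<in> carrier A \<Longrightarrow> lam A M a (lam A M (inv\<^bsub>M\<^esub> a) c) = c"
  using lam_M_mult[of a "inv\<^bsub>M\<^esub> a" c] M.r_inv[of a] by simp

lemma lam_M_inv_self: "a \<in> carrier A \<Longrightarrow> lam A M a (inv\<^bsub>M\<^esub> a) = inv a"
  unfolding lam_def using M.r_inv[of a] by simp

definition lam_kernel :: "'a set" where
  "lam_kernel = {a \<in> carrier A. \<forall>b\<in>carrier A. lam A M a b = b}"

lemma lam_kernelD: "a \<in> lam_kernel \<Longrightarrow> b \<in> carrier A \<Longrightarrow> lam A M a b = b"
  unfolding lam_kernel_def by blast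

lemma lam_kernel_subset: "lam_kernel \<subseteq> carrier A"
  unfolding lam_kernel_def by blast

lemma M_mult_lam_kernel: "a \<in> lam_kernel \<Longrightarrow> b \<in> carrier A \<Longrightarrow> a \<otimes>\<^bsub>M\<^esub> b = a \<otimes> b"
  using M_mult_eq lam_kernelD lam_kernel_subset by auto

lemma lam_kernel_subgroup: "subgroup lam_kernel A"
proof (rule subgroupI)
  show "lam_kernel \<subseteq> carrier A" by (rule lam_kernel_subset)
  show "lam_kernel \<noteq> {}" unfolding lam_kernel_def by auto
next
  fix a assume a: "a \<in> lam_kernel"
  then have ac: "a \<in> carrier A" using lam_kernel_subset by blast
  have "a \<otimes>\<^bsub>M\<^esub> inv a = \<one>\<^bsub>M\<^esub>" using M_mult_lam_kernel[OF a] ac by simp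
  then have "inv\<^bsub>M\<^esub> a = inv a" using ac by (simp add: M.inv_comm M.inv_equality)
  then show "inv a \<in> lam_kernel"
    using a ac lam_M_inv_left[of a] unfolding lam_kernel_def by auto
next
  fix a c assume a: "a \<in> lam_kernel" and c: "c \<in> lam_kernel"
  then have ac: "a \<in> carrier A" and cc: "c \<in> carrier A" using lam_kernel_subset by auto
  have "lam A M (a \<otimes>\<^bsub>M\<^esub> c) b = b" if "b \<in> carrier A" for b
    using that ac cc a c by (simp add: lam_M_mult lam_kernelD)
  then show "a \<otimes> c \<in> lam_kernel"
    using ac cc M_mult_lam_kernel[OF a cc] unfolding lam_kernel_def by simp
qed

lemma lam_eq_iff_diff_in_lam_kernel:
  assumes x: "x \<in> carrier A" and y: "y \<in> carrier A"
  shows "(\<forall>b\<in>carrier A. lam A M x b = lam A M y b) \<longleftrightarrow> x \<otimes> inv y \<in> lam_kernel"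
proof
  assume eq: "\<forall>b\<in>carrier A. lam A M x b = lam A M y b"
  have diff: "x \<otimes> inv y = x \<otimes>\<^bsub>M\<^esub> inv\<^bsub>M\<^esub> y"
    using x y eq by (simp add: M_mult_eq lam_M_inv_self)
  have "lam A M (x \<otimes>\<^bsub>M\<^esub> inv\<^bsub>M\<^esub> y) b = b" if b: "b \<in> carrier A" for b
    using x y b eq by (simp add: lam_M_mult)
  then show "x \<otimes> inv y \<in> lam_kernel" unfolding lam_kernel_def diff using x y by simp
next
  assume v: "x \<otimes> inv y \<in> lam_kernel"
  have x_eq: "(x \<otimes> inv y) \<otimes>\<^bsub>M\<^esub> y = x"
    using x y M_mult_lam_kernel[OF v y] by (simp add: m_assoc)
  show "\<forall>b\<in>carrier A. lam A M x b = lam A M y b"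
  proof
    fix b assume b: "b \<in> carrier A"
    have "lam A M x b = lam A M (x \<otimes> inv y) (lam A M y b)"
      using lam_M_mult[of "x \<otimes> inv y" y b] x y b by (simp add: x_eq)
    also have "\<dots> = lam A M y b" using v y b by (simp add: lam_kernelD)
    finally show "lam A M x b = lam A M y b" .
  qed
qed

lemma bstar_eq: "bstar A M a b = lam A M a b \<otimes> inv b"
  unfolding bstar_def lam_def ..

lemma bstar_closed [simp]: "a \<in> carrier A \<Longrightarrow> b \<in> carrier A \<Longrightarrow> bstar A M a b \<in> carrier A"
  unfolding bstar_eq by simp

lemma bstar_eq_one_iff: "a \<in> carrier A \<Longrightarrow> b \<in> carrier A \<Longrightarrow> bstar A M a b = \<one> \<longleftrightarrow> lam A M a b = b"
  unfolding bstar_eq by (simp add: inv_solve_right')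

lemma star_prod_carrier_eq_one_iff:
  assumes "I \<subseteq> carrier A"
  shows "star_prod A M I (carrier A) = {\<one>} \<longleftrightarrow> I \<subseteq> lam_kernel"
proof -
  have gens: "{bstar A M i j |i j. i \<in> I \<and> j \<in> carrier A} \<subseteq> carrier A" using assms by auto
  show ?thesis
    unfolding star_prod_def generate_eq_one_iff[OF gens] lam_kernel_def
    using assms by (fastforce simp: bstar_eq_one_iff)
qed

lemma bstar_mult_right: "\<lbrakk>a \<in> carrier A; b \<in> carrier A; c \<in> carrier A\<rbrakk> \<Longrightarrow>
    bstar A M a (b \<otimes> c) = bstar A M a b \<otimes> (b \<otimes> bstar A M a c \<otimes> inv b)"
  by (simp add: bstar_eq lam_mult m_assoc inv_mult_group)

lemma lam_bstar: "\<lbrakk>c \<in> carrier A; a \<in> carrier A; b \<in> carrier A\<rbrakk> \<Longrightarrow>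
    lam A M c (bstar A M a b) = bstar A M (c \<otimes>\<^bsub>M\<^esub> a \<otimes>\<^bsub>M\<^esub> inv\<^bsub>M\<^esub> c) (lam A M c b)"
  by (simp add: bstar_eq lam_mult lam_inv lam_M_mult)

lemma conj_bstar: "\<lbrakk>c \<in> carrier A; a \<in> carrier A; b \<in> carrier A\<rbrakk> \<Longrightarrow>
    inv c \<otimes> bstar A M a b \<otimes> c = inv (bstar A M a (inv c)) \<otimes> bstar A M a (inv c \<otimes> b)"
  by (simp add: bstar_mult_right m_assoc)

lemma brace_idealI:
  assumes N: "I \<lhd> A" and lam_I: "\<And>c. c \<in> carrier A \<Longrightarrow> lam A M c ` I \<subseteq> I"
    and bstar_I: "\<And>w a. w \<in> I \<Longrightarrow> a \<in> carrier A \<Longrightarrow> bstar A M w a \<in> I"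
  shows "brace_ideal A M I"
proof -
  have sg: "subgroup I A" using N by (rule normal_imp_subgroup)
  have lam_in: "lam A M c x \<in> I" if "c \<in> carrier A" "x \<in> I" for c x using lam_I that by blast
  have sub: "subgroup I M"
  proof (rule M.subgroupI)
    show "I \<subseteq> carrier M" using subgroup.subset[OF sg] by simp
    show "I \<noteq> {}" using subgroup.one_closed[OF sg] by blast
  next
    fix w assume w: "w \<in> I"
    then have wc: "w \<in> carrier A" using subgroup.subset[OF sg] by blast
    have "inv\<^bsub>M\<^esub> w = lam A M (inv\<^bsub>M\<^esub> w) (inv w)"
      using lam_M_inv_left[OF wc, of "inv\<^bsub>M\<^esub> w"] wc by (simp add: lam_M_inv_self)
    moreover have "lam A M (inv\<^bsub>M\<^esub> w) (inv w) \<in> I"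
      using wc w subgroup.m_inv_closed[OF sg] by (simp add: lam_in)
    ultimately show "inv\<^bsub>M\<^esub> w \<in> I" by simp
  next
    fix w v assume w: "w \<in> I" and v: "v \<in> I"
    then have "w \<in> carrier A" "v \<in> carrier A" using subgroup.subset[OF sg] by auto
    then show "w \<otimes>\<^bsub>M\<^esub> v \<in> I"
      using w v by (simp add: M_mult_eq lam_in subgroup.m_closed[OF sg])
  qed
  have "a \<otimes>\<^bsub>M\<^esub> w \<otimes>\<^bsub>M\<^esub> inv\<^bsub>M\<^esub> a \<in> I" if a: "a \<in> carrier A" and w: "w \<in> I" for a w
  proof -
    define a' where "a' = inv\<^bsub>M\<^esub> a"
    have a': "a' \<in> carrier A" and wc: "w \<in> carrier A"
      using a w subgroup.subset[OF sg] by (auto simp: a'_def)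
    define i where "i = lam A M a (w \<otimes> bstar A M w a')"
    have i: "i \<in> I"
      unfolding i_def using a a' w by (blast intro: lam_in subgroup.m_closed[OF sg] bstar_I)
    have "w \<otimes>\<^bsub>M\<^esub> a' = (w \<otimes> bstar A M w a') \<otimes> a'"
      using wc a' by (simp add: M_mult_eq bstar_eq m_assoc)
    \<comment> \<open>\<open>a \<circ> w \<circ> a' = a + \<lambda>\<^sub>a(w + w * a') - a\<close>, using \<open>\<lambda>\<^sub>a(a') = -a\<close>\<close>
    then have "a \<otimes>\<^bsub>M\<^esub> (w \<otimes>\<^bsub>M\<^esub> a') = a \<otimes> i \<otimes> inv a"
      using a a' wc by (simp add: M_mult_eq[of a] lam_mult i_def a'_def lam_M_inv_self m_assoc)
    then show ?thesis using a wc i by (simp add: M.m_assoc a'_def normal.inv_op_closed2[OF N])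
  qed
  then have "I \<lhd> M" by (simp add: M.normal_inv_iff sub)
  then show ?thesis unfolding brace_ideal_def using N lam_I by blast
qed

lemma B2_brace_ideal: "brace_ideal A M (B2 A M)"
proof -
  define G2 where "G2 = {bstar A M a b |a b. a \<in> carrier A \<and> b \<in> carrier A}"
  have B2: "B2 A M = generate A G2" unfolding B2_def star_prod_def G2_def ..
  have G2: "G2 \<subseteq> carrier A" unfolding G2_def by auto
  have "generate A G2 \<lhd> A"
  proof (rule normal_generate_if_conj_closed[OF G2])
    fix c s assume c: "c \<in> carrier A" and "s \<in> G2"
    then obtain a b where a: "a \<in> carrier A" and b: "b \<in> carrier A" and s: "s = bstar A M a b"
      unfolding G2_def by blast
    have "bstar A M a (inv c) \<in> G2" "bstar A M a (inv c \<otimes> b) \<in> G2"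
      unfolding G2_def using a b c by blast+
    then show "inv c \<otimes> s \<otimes> c \<in> generate A G2"
      unfolding s conj_bstar[OF c a b] by (blast intro: generate.inv generate.incl generate.eng)
  qed
  moreover have "lam A M c ` generate A G2 \<subseteq> generate A G2" if c: "c \<in> carrier A" for c
  proof (rule hom_image_generate_subset[OF lam_hom[OF c] G2])
    have "lam A M c ` G2 \<subseteq> G2"
      unfolding G2_def using c by (fastforce simp: lam_bstar)
    then show "lam A M c ` G2 \<subseteq> generate A G2" by (blast intro: generate.incl)
  qed
  moreover have "bstar A M w a \<in> generate A G2" if "w \<in> generate A G2" "a \<in> carrier A" for w a
    using that generate_in_carrier[OF G2] unfolding G2_def by (blast intro: generate.incl)
  ultimately show ?thesis unfolding B2 by (rule brace_idealI)
qed

lemma B3_eq_one_iff: "B3 A M = {\<one>} \<longleftrightarrow> B2 A M \<subseteq> lam_kernel"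
  unfolding B3_def by (rule star_prod_carrier_eq_one_iff[OF brace_ideal_subset[OF B2_brace_ideal]])

lemma smallest_nonzero_ideal_subset_lam_kernel:
  assumes V: "smallest_nonzero_ideal A M V" and B2: "B2 A M \<subseteq> lam_kernel"
  shows "V \<subseteq> lam_kernel"
proof (cases "B2 A M = {\<one>}")
  case True
  then have "carrier A \<subseteq> lam_kernel"
    unfolding B2_def by (simp add: star_prod_carrier_eq_one_iff)
  then show ?thesis using V brace_ideal_subset unfolding smallest_nonzero_ideal_def by blast
next
  case False
  then show ?thesis using V B2_brace_ideal B2 unfolding smallest_nonzero_ideal_def by blast
qed

lemma lam_constant_iff_differences_subset_lam_kernel:
  assumes "Xs \<subseteq> carrier A"
  shows "(\<forall>x\<in>Xs. \<forall>y\<in>Xs. \<forall>b\<in>carrier A. lam A M x b = lam A M y b) \<longleftrightarrow>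
    differences A Xs \<subseteq> lam_kernel"
  using assms lam_eq_iff_diff_in_lam_kernel unfolding differences_def by blast

lemma bstar_inv_right: "a \<in> carrier A \<Longrightarrow> b \<in> carrier A \<Longrightarrow>
    bstar A M a (inv b) = inv b \<otimes> inv (bstar A M a b) \<otimes> b"
  by (simp add: bstar_eq lam_inv m_assoc inv_mult_group)

lemma bstar_right_subgroup:
  assumes N: "N \<lhd> A" and w: "w \<in> carrier A"
  shows "subgroup {a \<in> carrier A. bstar A M w a \<in> N} A"
proof (rule subgroupI)
  have sg: "subgroup N A" using N by (rule normal_imp_subgroup)
  show "{a \<in> carrier A. bstar A M w a \<in> N} \<noteq> {}"
    using w subgroup.one_closed[OF sg] by (auto simp: bstar_eq intro!: exI[of _ \<one>])
  fix a b assume a: "a \<in> {a \<in> carrier A. bstar A M w a \<in> N}" and b: "b \<in> {a \<in> carrier A. bstar A M w a \<in> N}"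
  then show "inv a \<in> {a \<in> carrier A. bstar A M w a \<in> N}"
    using w by (simp add: bstar_inv_right normal.inv_op_closed1[OF N] subgroup.m_inv_closed[OF sg])
  show "a \<otimes> b \<in> {a \<in> carrier A. bstar A M w a \<in> N}"
    using a b w by (simp add: bstar_mult_right normal.inv_op_closed2[OF N] subgroup.m_closed[OF sg])
qed auto

lemma bstar_in_generate_differences:
  assumes Xs: "Xs \<subseteq> carrier A" and gen: "generate A Xs = carrier A"
    and N: "generate A (differences A Xs) \<lhd> A"
    and w: "w \<in> carrier A" and lam_Xs: "lam A M w ` Xs \<subseteq> Xs" and a: "a \<in> carrier A"
  shows "bstar A M w a \<in> generate A (differences A Xs)"
proof -
  have "Xs \<subseteq> {a \<in> carrier A. bstar A M w a \<in> generate A (differences A Xs)}"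
  proof
    fix x assume x: "x \<in> Xs"
    then have "bstar A M w x \<in> differences A Xs"
      using lam_Xs unfolding bstar_eq differences_def by blast
    then show "x \<in> {a \<in> carrier A. bstar A M w a \<in> generate A (differences A Xs)}"
      using x Xs by (blast intro: generate.incl)
  qed
  then have "generate A Xs \<subseteq> {a \<in> carrier A. bstar A M w a \<in> generate A (differences A Xs)}"
    by (rule generate_subgroup_incl[OF _ bstar_right_subgroup[OF N w]])
  then show ?thesis using a gen by blast
qed

lemma B2_subset_generate_differences:
  assumes Xs: "Xs \<subseteq> carrier A" and gen: "generate A Xs = carrier A"
    and lam_Xs: "\<And>a. a \<in> carrier A \<Longrightarrow> lam A M a ` Xs \<subseteq> Xs"
    and sig_Xs: "\<And>a. a \<in> carrier A \<Longrightarrow> sig A a ` Xs \<subseteq> Xs"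
  shows "B2 A M \<subseteq> generate A (differences A Xs)"
proof -
  have N: "generate A (differences A Xs) \<lhd> A"
    using sig_Xs by (intro generate_differences_normal[OF Xs]) (auto simp: sig_def)
  have "{bstar A M a b |a b. a \<in> carrier A \<and> b \<in> carrier A} \<subseteq> generate A (differences A Xs)"
    using bstar_in_generate_differences[OF Xs gen N] lam_Xs by blast
  then show ?thesis
    unfolding B2_def star_prod_def by (rule generate_subgroup_incl[OF _ normal_imp_subgroup[OF N]])
qed

end

theorem mainTheorem10:
  fixes A M :: "'a monoid" and Xs V :: "'a set"
  assumes brace: "skew_brace A M"
    and fin: "finite (carrier A)"
    and Xsub: "Xs \<subseteq> carrier A"
    and card3: "card Xs \<ge> 3"
    and lamX: "\<forall>a\<in>carrier A. lam A M a ` Xs = Xs"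
    and sigX: "\<forall>a\<in>carrier A. sig A a ` Xs = Xs"
    and gen: "generate A Xs = carrier A"
    and Vdef: "V = ideal_gen A M {monoid.mult A x (m_inv A y) | x y. x \<in> Xs \<and> y \<in> Xs}"
    and Vsmall: "smallest_nonzero_ideal A M V"
    and triv: "trivial_quotient A M V"
    and cyc: "cyclic_grp (A Mod V)"
    and trans: "\<forall>x\<in>Xs. \<forall>y\<in>Xs. \<exists>a\<in>V. \<exists>b\<in>V. sig A a (lam A M b x) = y"
  shows "(B3 A M = {one A} \<longleftrightarrow>
            (\<forall>x\<in>Xs. \<forall>y\<in>Xs. \<forall>b\<in>carrier A. lam A M x b = lam A M y b))
       \<and> (B3 A M = {one A} \<longrightarrow> (\<forall>v\<in>V. \<forall>b\<in>carrier A. lam A M v b = b))"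
proof -
  interpret skew_left_brace A M using brace by (rule skew_left_braceI)
  let ?D = "differences A Xs"
  have lam_Xs: "\<And>a. a \<in> carrier A \<Longrightarrow> lam A M a ` Xs \<subseteq> Xs"
    and sig_Xs: "\<And>a. a \<in> carrier A \<Longrightarrow> sig A a ` Xs \<subseteq> Xs"
    using lamX sigX by auto
  have V: "V = ideal_gen A M ?D" unfolding Vdef differences_def ..
  have D_V: "?D \<subseteq> V" unfolding V by (rule subset_ideal_gen[OF differences_subset[OF Xsub]])
  have V_B3: "V \<subseteq> lam_kernel" if "B3 A M = {\<one>\<^bsub>A\<^esub>}"
    using that B3_eq_one_iff smallest_nonzero_ideal_subset_lam_kernel[OF Vsmall] by blast
  have "B3 A M = {\<one>\<^bsub>A\<^esub>} \<longleftrightarrow> ?D \<subseteq> lam_kernel"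
  proof
    assume "B3 A M = {\<one>\<^bsub>A\<^esub>}"
    then show "?D \<subseteq> lam_kernel" using D_V V_B3 by blast
  next
    assume "?D \<subseteq> lam_kernel"
    then have "generate A ?D \<subseteq> lam_kernel" by (rule generate_subgroup_incl[OF _ lam_kernel_subgroup])
    then show "B3 A M = {\<one>\<^bsub>A\<^esub>}"
      using B3_eq_one_iff B2_subset_generate_differences[OF Xsub gen lam_Xs sig_Xs] by blast
  qed
  then show ?thesis
    using lam_constant_iff_differences_subset_lam_kernel[OF Xsub] V_B3 by (auto simp: lam_kernel_def)
qed

end
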